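(* Let $q>1$, $\Sigma\sim\mathrm{Mallows}(\mathbb{Z},1/q)$, $c_e:=\mathbb{E}\,C_1(\rho\circ\Sigma)$ and $c_o:=\mathbb{E}\,C_1(r\circ\Sigma)$. Then $$\frac{1}{1+q}\le c_e\le\frac{q}{1+q}\qquad\text{and}\qquad\frac{1}{1+q}\le c_o\le\frac{q}{1+q}.$$
   Context: For a finite set $A\subseteq\mathbb{Z}$ and a bijection $\pi:A\to A$, $\mathrm{inv}(\pi)$ is the number of pairs $i<j$ in $A$ with $\pi(i)>\pi(j)$, and $\Pi_A\sim\mathrm{Mallows}(A,q)$ means $\mathbb{P}(\Pi_A=\pi)\propto q^{\mathrm{inv}(\pi)}$ over bijections $\pi$ of $A$. For a bijection $\sigma$ of a set $B\subseteq\mathbb{Z}$ and finite $A\subseteq B$, the pattern $\sigma_A:A\to A$ is defined by $\sigma_A(a)=a_{(i)}$ when $\sigma(a)$ is the $i$-th smallest element of $\sigma[A]$, where $a_{(i)}$ is the $i$-th smallest element of $A$. For $0<p<1$, $\mathrm{Mallows}(\mathbb{Z},p)$ is Gnedin and Olshanski's bi-infinite Mallows measure: the law of a random bijection $\Sigma$ of $\mathbb{Z}$ such that $\Sigma_I\sim\mathrm{Mallows}(I,p)$ for every finite interval of integers $I$, and, with $I_n=\{-n,\dots,n\}$, almost surely for every $i\in\mathbb{Z}$ one has $\Sigma_{I_n}(i)=\Sigma(i)$ for all sufficiently large $n$. $C_1(\pi)$ is the number of fixed points of a permutation $\pi$ of $\mathbb{Z}$; $r(i)=-i$, $\rho(i)=1-i$.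 *)

theory Defs
  imports "HOL-Probability.Probability" "HOL-Combinatorics.Permutations"
begin

definition inv_count :: "(int \<Rightarrow> int) \<Rightarrow> int set \<Rightarrow> nat" where
  "inv_count \<pi> A = card {(i, j). i \<in> A \<and> j \<in> A \<and> i < j \<and> \<pi> i > \<pi> j}"

text \<open>Mallows(A,q) probability of a bijection \<pi> of A (bijections of A are
  represented as permutations of int fixing everything outside A).\<close>
definition mallows_weight :: "real \<Rightarrow> int set \<Rightarrow> (int \<Rightarrow> int) \<Rightarrow> real" where
  "mallows_weight q A \<pi> =
     q ^ inv_count \<pi> A / (\<Sum>tau \<in> {tau. tau permutes A}. q ^ inv_count tau A)"

text \<open>Pattern sigma_A: a in A is sent to the i-th smallest element of A, where
  \<sigma> a is the i-th smallest element of sigma[A] (0-based indexing here);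
  identity outside A.\<close>
definition pattern :: "(int \<Rightarrow> int) \<Rightarrow> int set \<Rightarrow> int \<Rightarrow> int" where
  "pattern \<sigma> A a =
     (if a \<in> A then sorted_list_of_set A ! card {b \<in> A. \<sigma> b < \<sigma> a} else a)"

definition mallows_Z :: "'w measure \<Rightarrow> ('w \<Rightarrow> int \<Rightarrow> int) \<Rightarrow> real \<Rightarrow> bool" where
  "mallows_Z M Sig p \<longleftrightarrow>
     prob_space M \<and>
     (\<forall>w \<in> space M. bij (Sig w)) \<and>
     (\<forall>i. (\<lambda>w. Sig w i) \<in> measurable M (count_space UNIV)) \<and>
     (\<forall>a b :: int. \<forall>\<pi>. \<pi> permutes {a..b} \<longrightarrow>
        {w \<in> space M. pattern (Sig w) {a..b} = \<pi>} \<in> sets M \<and>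
        measure M {w \<in> space M. pattern (Sig w) {a..b} = \<pi>} = mallows_weight p {a..b} \<pi>) \<and>
     (AE w in M. \<forall>i. eventually (\<lambda>n::nat. pattern (Sig w) {- int n..int n} i = Sig w i) sequentially)"

definition C1 :: "(int \<Rightarrow> int) \<Rightarrow> ennreal" where
  "C1 \<pi> = emeasure (count_space UNIV) {i. \<pi> i = i}"

definition r_map :: "int \<Rightarrow> int" where "r_map i = - i"
definition rho_map :: "int \<Rightarrow> int" where "rho_map i = 1 - i"

end

theory Submission
  imports Defs
begin

text \<open>Exchanging the values \<open>v\<close> and \<open>v + 1\<close> of a permutation changes its number of
  inversions by exactly one. Under Mallows weights with parameter \<open>p = 1/q\<close> this gives
  \<open>p \<cdot> P(\<Sigma> i = v) \<le> P(\<Sigma> i = v \<plusminus> 1)\<close>, first on finite windows and then in the limit.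
  Performed at an end of a window, the same exchange gives geometric tails, which make the
  patterns of large windows stabilise fast enough to yield translation invariance
  \<open>P(\<Sigma> i = j) = P(\<Sigma> 0 = j - i)\<close>. Hence the expected number of fixed points of
  \<open>z \<mapsto> c - \<Sigma> z\<close> is \<open>\<Sum>\<^sub>i P(\<Sigma> 0 = c - 2i)\<close>, the mass of the law of \<open>\<Sigma> 0\<close> on the
  residue class of \<open>c\<close> modulo 2. The two classes have total mass 1 and each carries at least
  \<open>p\<close> times the mass of the other, which confines both to \<open>[p/(1+p), 1/(1+p)]\<close>.\<close>

section \<open>Inversions and adjacent transpositions of values\<close>

definition swap_adj :: "int \<Rightarrow> int \<Rightarrow> int" where
  "swap_adj v = Transposition.transpose v (v + 1)"

lemma swap_adj_apply: "swap_adj v x = (if x = v then v + 1 else if x = v + 1 then v else x)"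
  by (simp add: swap_adj_def transpose_def)

lemma swap_adj_comp_swap_adj [simp]: "swap_adj v \<circ> (swap_adj v \<circ> f) = f"
  by (simp add: fun_eq_iff swap_adj_apply)

lemma swap_adj_comp_permutes:
  "v \<in> J \<Longrightarrow> v + 1 \<in> J \<Longrightarrow> \<pi> permutes J \<Longrightarrow> (swap_adj v \<circ> \<pi>) permutes J"
  unfolding swap_adj_def by (intro permutes_compose permutes_swap_id)

definition inversions :: "(int \<Rightarrow> int) \<Rightarrow> int set \<Rightarrow> (int \<times> int) set" where
  "inversions \<pi> A = {(i, j). i \<in> A \<and> j \<in> A \<and> i < j \<and> \<pi> i > \<pi> j}"

lemma inv_count_eq_card_inversions: "inv_count \<pi> A = card (inversions \<pi> A)"
  by (simp add: inv_count_def inversions_def)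

lemma finite_inversions: "finite A \<Longrightarrow> finite (inversions \<pi> A)"
  by (rule finite_subset[of _ "A \<times> A"]) (auto simp: inversions_def)

lemma swap_adj_less_iff: "{x, y} \<noteq> {v, v + 1} \<Longrightarrow> swap_adj v x < swap_adj v y \<longleftrightarrow> x < y"
  by (auto simp: swap_adj_apply doubleton_eq_iff)

lemma inv_count_swap_adj_up:
  assumes "finite J" "\<pi> permutes J" "P \<in> J" "Q \<in> J" "\<pi> P = v" "\<pi> Q = v + 1" "P < Q"
  shows "inv_count (swap_adj v \<circ> \<pi>) J = Suc (inv_count \<pi> J)"
proof -
  have "inj \<pi>" using assms(2) permutes_inj by blast
  then have preimage: "\<pi> x = v \<longleftrightarrow> x = P" "\<pi> x = v + 1 \<longleftrightarrow> x = Q" for x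
    using assms(5,6) by (metis injD)+
  have "(i, j) \<in> inversions (swap_adj v \<circ> \<pi>) J \<longleftrightarrow> (i, j) \<in> insert (P, Q) (inversions \<pi> J)" for i j
  proof (cases "(i, j) = (P, Q)")
    case True
    then show ?thesis using assms by (auto simp: inversions_def swap_adj_apply)
  next
    case False
    have "{\<pi> j, \<pi> i} \<noteq> {v, v + 1}" if "i < j"
      using False that assms(7) by (auto simp: doubleton_eq_iff preimage)
    then show ?thesis using False by (auto simp: inversions_def swap_adj_less_iff)
  qed
  then have "inversions (swap_adj v \<circ> \<pi>) J = insert (P, Q) (inversions \<pi> J)"
    by auto
  moreover have "(P, Q) \<notin> inversions \<pi> J"
    using assms by (auto simp: inversions_def)
  ultimately show ?thesis
    using finite_inversions[OF assms(1)] by (simp add: inv_count_eq_card_inversions)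
qed

lemma inv_count_swap_adj_down:
  assumes "finite J" "\<pi> permutes J" "P \<in> J" "Q \<in> J" "\<pi> P = v + 1" "\<pi> Q = v" "P < Q"
  shows "inv_count \<pi> J = Suc (inv_count (swap_adj v \<circ> \<pi>) J)"
proof -
  have "v \<in> J" "v + 1 \<in> J" using assms permutes_in_image by metis+
  then have "inv_count (swap_adj v \<circ> (swap_adj v \<circ> \<pi>)) J = Suc (inv_count (swap_adj v \<circ> \<pi>) J)"
    using assms by (intro inv_count_swap_adj_up[of J _ P Q])
      (auto simp: swap_adj_comp_permutes swap_adj_apply)
  then show ?thesis by simp
qed

lemma power_inv_count_swap_adj_ge:
  assumes "finite J" "\<pi> permutes J" "v \<in> J" "v + 1 \<in> J" "0 \<le> p" "p \<le> (1::real)"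
  shows "p * p ^ inv_count \<pi> J \<le> p ^ inv_count (swap_adj v \<circ> \<pi>) J"
proof -
  obtain P Q where P: "P \<in> J" "\<pi> P = v" and Q: "Q \<in> J" "\<pi> Q = v + 1"
    using assms(2-4) permutes_image by (metis imageE)
  then have "P \<noteq> Q" by auto
  then consider "P < Q" | "Q < P" by linarith
  then show ?thesis
  proof cases
    case 1
    then show ?thesis using inv_count_swap_adj_up[OF assms(1,2) P(1) Q(1) P(2) Q(2)] by simp
  next
    case 2
    then have "p * p ^ inv_count \<pi> J = p * p * p ^ inv_count (swap_adj v \<circ> \<pi>) J"
      using inv_count_swap_adj_down[OF assms(1,2) Q(1) P(1) Q(2) P(2)] by simp
    also have "\<dots> \<le> p ^ inv_count (swap_adj v \<circ> \<pi>) J"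
      using assms(5,6) by (intro mult_left_le_one_le) (simp_all add: mult_le_one)
    finally show ?thesis .
  qed
qed

lemma mult_sum_le_sum_bij_betw:
  assumes "bij_betw f A B" "\<And>x. x \<in> A \<Longrightarrow> c * g x \<le> g (f x)"
  shows "c * sum g A \<le> (sum g B :: real)"
proof -
  have "c * sum g A \<le> (\<Sum>x\<in>A. g (f x))"
    unfolding sum_distrib_left by (intro sum_mono assms)
  also have "\<dots> = sum g B" using sum.reindex_bij_betw[OF assms(1)] by simp
  finally show ?thesis .
qed

lemma sum_power_inv_count_swap_adj:
  assumes "finite J" "v \<in> J" "v + 1 \<in> J" "u \<in> {v, v + 1}" "0 \<le> p" "p \<le> (1::real)"
  shows "p * (\<Sum>\<pi> | \<pi> permutes J \<and> \<pi> i = u. p ^ inv_count \<pi> J)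
         \<le> (\<Sum>\<pi> | \<pi> permutes J \<and> \<pi> i = swap_adj v u. p ^ inv_count \<pi> J)"
proof (rule mult_sum_le_sum_bij_betw)
  show "bij_betw ((\<circ>) (swap_adj v)) {\<pi>. \<pi> permutes J \<and> \<pi> i = u}
          {\<pi>. \<pi> permutes J \<and> \<pi> i = swap_adj v u}"
    by (rule bij_betwI[where g = "(\<circ>) (swap_adj v)"])
      (use assms(2-4) in \<open>auto simp: swap_adj_comp_permutes swap_adj_apply\<close>)
qed (use assms power_inv_count_swap_adj_ge in auto)

lemma sum_le_mult_sum_inj_on:
  assumes "inj_on f A" "f ` A \<subseteq> B" "finite B" "\<And>x. x \<in> A \<Longrightarrow> g x = c * g (f x)" "c \<ge> 0"
    "\<And>x. x \<in> B \<Longrightarrow> g x \<ge> 0"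
  shows "sum g A \<le> c * (sum g B :: real)"
proof -
  have "sum g A = c * sum g (f ` A)"
    by (simp add: assms(4) sum.reindex[OF assms(1)] sum_distrib_left)
  also have "\<dots> \<le> c * sum g B"
    using assms by (intro mult_left_mono sum_mono2) auto
  finally show ?thesis .
qed

text \<open>Lowering the value at the left end of the interval by one removes exactly one inversion,
  so every unit of height of \<open>\<pi> a\<close> costs a factor \<open>p\<close>.\<close>

lemma sum_power_inv_count_left_tail:
  assumes "0 \<le> p" "p \<le> (1::real)"
  shows "(\<Sum>\<pi> | \<pi> permutes {a..b} \<and> a + int m \<le> \<pi> a. p ^ inv_count \<pi> {a..b})
         \<le> p ^ m * (\<Sum>\<pi> | \<pi> permutes {a..b}. p ^ inv_count \<pi> {a..b})"
proof (induction m)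
  case 0
  show ?case by (auto intro!: sum_mono2 simp: finite_permutations assms(1))
next
  case (Suc m)
  let ?J = "{a..b}"
  let ?w = "\<lambda>\<pi>. p ^ inv_count \<pi> ?J"
  let ?A = "{\<pi>. \<pi> permutes ?J \<and> a + int (Suc m) \<le> \<pi> a}"
  let ?B = "{\<pi>. \<pi> permutes ?J \<and> a + int m \<le> \<pi> a}"
  let ?f = "\<lambda>\<pi>. swap_adj (\<pi> a - 1) \<circ> \<pi>"
  have step: "?f \<pi> \<in> ?B \<and> ?w \<pi> = p * ?w (?f \<pi>)" if "\<pi> \<in> ?A" for \<pi>
  proof -
    define v where "v = \<pi> a - 1"
    have perm: "\<pi> permutes ?J" and high: "a + int (Suc m) \<le> \<pi> a" using that by auto
    then have "a \<in> ?J" using permutes_not_in by fastforce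
    then have "\<pi> a \<in> ?J" by (simp only: permutes_in_image[OF perm])
    then have vJ: "v \<in> ?J" "v + 1 \<in> ?J" using high by (auto simp: v_def)
    then obtain Q where Q: "Q \<in> ?J" "\<pi> Q = v"
      using perm permutes_image by (metis imageE)
    then have "a < Q" using \<open>a \<in> ?J\<close> by (cases "Q = a") (auto simp: v_def)
    then have "inv_count \<pi> ?J = Suc (inv_count (swap_adj v \<circ> \<pi>) ?J)"
      using \<open>a \<in> ?J\<close> Q perm by (intro inv_count_swap_adj_down) (auto simp: v_def)
    moreover have "swap_adj v \<circ> \<pi> \<in> ?B"
      using high swap_adj_comp_permutes[OF vJ perm] by (auto simp: swap_adj_apply v_def)
    ultimately show ?thesis by (simp add: v_def)
  qed
  have "inj_on ?f ?A"
  proof (rule inj_onI)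
    fix \<pi> \<sigma> assume eq: "?f \<pi> = ?f \<sigma>"
    have "?f \<tau> a = \<tau> a - 1" for \<tau> :: "int \<Rightarrow> int" by (simp add: swap_adj_apply)
    then have "\<pi> a = \<sigma> a" using fun_cong[OF eq, of a] by simp
    then show "\<pi> = \<sigma>" using arg_cong[OF eq, of "(\<circ>) (swap_adj (\<pi> a - 1))"] by simp
  qed
  then have "sum ?w ?A \<le> p * sum ?w ?B"
    using step assms(1) by (intro sum_le_mult_sum_inj_on) (auto simp: finite_permutations)
  also have "\<dots> \<le> p * (p ^ m * (\<Sum>\<pi> | \<pi> permutes ?J. ?w \<pi>))"
    using Suc.IH assms(1) by (rule mult_left_mono)
  finally show ?case by (simp add: mult.assoc)
qed

definition reflect_perm :: "int \<Rightarrow> (int \<Rightarrow> int) \<Rightarrow> int \<Rightarrow> int" where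
  "reflect_perm c \<pi> = (\<lambda>z. c - \<pi> (c - z))"

lemma reflect_perm_permutes:
  assumes "\<pi> permutes {a..b}"
  shows "reflect_perm (a + b) \<pi> permutes {a..b}"
proof (rule inj_imp_permutes)
  show "inj_on (reflect_perm (a + b) \<pi>) {a..b}"
    by (rule inj_onI) (auto simp: reflect_perm_def dest!: injD[OF permutes_inj[OF assms]])
  show "reflect_perm (a + b) \<pi> x \<in> {a..b}" if "x \<in> {a..b}" for x
    using permutes_in_image[OF assms, of "a + b - x"] that by (auto simp: reflect_perm_def)
  show "reflect_perm (a + b) \<pi> x = x" if "x \<notin> {a..b}" for x
    using permutes_not_in[OF assms, of "a + b - x"] that by (auto simp: reflect_perm_def)
qed simp

lemma inv_count_reflect_perm: "inv_count (reflect_perm (a + b) \<pi>) {a..b} = inv_count \<pi> {a..b}"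
proof -
  let ?r = "\<lambda>(i, j). (a + b - j, a + b - i)"
  have "bij_betw ?r (inversions (reflect_perm (a + b) \<pi>) {a..b}) (inversions \<pi> {a..b})"
    by (rule bij_betwI[where g = ?r]) (auto simp: inversions_def reflect_perm_def)
  then show ?thesis by (simp add: inv_count_eq_card_inversions bij_betw_same_card)
qed

lemma sum_power_inv_count_right_tail:
  assumes "0 \<le> p" "p \<le> (1::real)"
  shows "(\<Sum>\<pi> | \<pi> permutes {a..b} \<and> \<pi> b \<le> b - int m. p ^ inv_count \<pi> {a..b})
         \<le> p ^ m * (\<Sum>\<pi> | \<pi> permutes {a..b}. p ^ inv_count \<pi> {a..b})"
proof -
  have "bij_betw (reflect_perm (a + b)) {\<pi>. \<pi> permutes {a..b} \<and> \<pi> b \<le> b - int m}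
          {\<pi>. \<pi> permutes {a..b} \<and> a + int m \<le> \<pi> a}"
    by (rule bij_betwI[where g = "reflect_perm (a + b)"])
      (auto simp: reflect_perm_permutes, auto simp: reflect_perm_def)
  then have "(\<Sum>\<pi> | \<pi> permutes {a..b} \<and> \<pi> b \<le> b - int m. p ^ inv_count \<pi> {a..b})
           = (\<Sum>\<pi> | \<pi> permutes {a..b} \<and> a + int m \<le> \<pi> a. p ^ inv_count \<pi> {a..b})"
    by (simp add: sum.reindex_bij_betw[symmetric] inv_count_reflect_perm)
  also have "\<dots> \<le> p ^ m * (\<Sum>\<pi> | \<pi> permutes {a..b}. p ^ inv_count \<pi> {a..b})"
    by (rule sum_power_inv_count_left_tail[OF assms])
  finally show ?thesis .
qed

definition shift_perm :: "int \<Rightarrow> (int \<Rightarrow> int) \<Rightarrow> int \<Rightarrow> int" where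
  "shift_perm k \<pi> = (\<lambda>z. \<pi> (z - k) + k)"

lemma shift_perm_neg [simp]: "shift_perm (- k) (shift_perm k \<pi>) = \<pi>"
  by (simp add: shift_perm_def)

lemma shift_perm_permutes:
  assumes "\<pi> permutes {a..b}"
  shows "shift_perm k \<pi> permutes {a + k..b + k}"
proof (rule inj_imp_permutes)
  show "inj_on (shift_perm k \<pi>) {a + k..b + k}"
    by (rule inj_onI) (auto simp: shift_perm_def dest!: injD[OF permutes_inj[OF assms]])
  show "shift_perm k \<pi> x \<in> {a + k..b + k}" if "x \<in> {a + k..b + k}" for x
    using permutes_in_image[OF assms, of "x - k"] that by (auto simp: shift_perm_def)
  show "shift_perm k \<pi> x = x" if "x \<notin> {a + k..b + k}" for x
    using permutes_not_in[OF assms, of "x - k"] that by (auto simp: shift_perm_def)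
qed simp

lemma bij_betw_shift_perm:
  "bij_betw (shift_perm k) {\<pi>. \<pi> permutes {a..b} \<and> P \<pi>}
     {\<pi>. \<pi> permutes {a + k..b + k} \<and> P (shift_perm (- k) \<pi>)}"
proof (rule bij_betwI[where g = "shift_perm (- k)"])
  have "shift_perm (- k) \<sigma> permutes {a..b}" if "\<sigma> permutes {a + k..b + k}" for \<sigma>
    using shift_perm_permutes[OF that, of "- k"] by simp
  then show "shift_perm (- k) \<in> {\<sigma>. \<sigma> permutes {a + k..b + k} \<and> P (shift_perm (- k) \<sigma>)}
      \<rightarrow> {\<pi>. \<pi> permutes {a..b} \<and> P \<pi>}" by auto
qed (auto simp: shift_perm_permutes, simp add: shift_perm_def)

lemma inv_count_shift_perm: "inv_count (shift_perm k \<pi>) {a + k..b + k} = inv_count \<pi> {a..b}"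
proof -
  let ?s = "\<lambda>(i, j). (i - k, j - k)"
  have "bij_betw ?s (inversions (shift_perm k \<pi>) {a + k..b + k}) (inversions \<pi> {a..b})"
    by (rule bij_betwI[where g = "\<lambda>(i, j). (i + k, j + k)"])
      (auto simp: inversions_def shift_perm_def)
  then show ?thesis by (simp add: inv_count_eq_card_inversions bij_betw_same_card)
qed

lemma mallows_weight_shift_perm:
  "mallows_weight p {a + k..b + k} (shift_perm k \<pi>) = mallows_weight p {a..b} \<pi>"
proof -
  have "(\<Sum>\<tau> | \<tau> permutes {a + k..b + k}. p ^ inv_count \<tau> {a + k..b + k})
      = (\<Sum>\<tau> | \<tau> permutes {a..b}. p ^ inv_count \<tau> {a..b})"
    using sum.reindex_bij_betw[OF bij_betw_shift_perm[of k a b "\<lambda>_. True"],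
        of "\<lambda>\<tau>. p ^ inv_count \<tau> {a + k..b + k}"]
    by (simp add: inv_count_shift_perm)
  then show ?thesis by (simp add: mallows_weight_def inv_count_shift_perm)
qed

lemma sum_mallows_weight_shift:
  "(\<Sum>\<pi> | \<pi> permutes {a..b} \<and> \<pi> x = y. mallows_weight p {a..b} \<pi>)
   = (\<Sum>\<pi> | \<pi> permutes {a + k..b + k} \<and> \<pi> (x + k) = y + k. mallows_weight p {a + k..b + k} \<pi>)"
proof -
  have "shift_perm (- k) \<pi> x = y \<longleftrightarrow> \<pi> (x + k) = y + k" for \<pi>
    by (auto simp: shift_perm_def)
  then show ?thesis
    using sum.reindex_bij_betw[OF bij_betw_shift_perm[of k a b "\<lambda>\<pi>. \<pi> x = y"],
        of "mallows_weight p {a + k..b + k}"]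
    by (simp add: mallows_weight_shift_perm)
qed

lemma sum_power_inv_count_pos:
  "0 < (p::real) \<Longrightarrow> finite J \<Longrightarrow> 0 < (\<Sum>\<tau> | \<tau> permutes J. p ^ inv_count \<tau> J)"
  by (rule sum_pos2[where i = id]) (auto simp: finite_permutations permutes_id)

lemma sum_mallows_weight:
  "(\<Sum>\<pi>\<in>S. mallows_weight p J \<pi>)
   = (\<Sum>\<pi>\<in>S. p ^ inv_count \<pi> J) / (\<Sum>\<tau> | \<tau> permutes J. p ^ inv_count \<tau> J)"
  by (simp add: mallows_weight_def sum_divide_distrib)

lemma sum_mallows_weight_swap_adj:
  assumes "finite J" "v \<in> J" "v + 1 \<in> J" "u \<in> {v, v + 1}" "0 < p" "p \<le> (1::real)"
  shows "p * (\<Sum>\<pi> | \<pi> permutes J \<and> \<pi> i = u. mallows_weight p J \<pi>)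
         \<le> (\<Sum>\<pi> | \<pi> permutes J \<and> \<pi> i = swap_adj v u. mallows_weight p J \<pi>)"
  using divide_right_mono[OF sum_power_inv_count_swap_adj[OF assms(1-4) _ assms(6)]]
    sum_power_inv_count_pos[OF assms(5,1)] assms(5)
  by (simp add: sum_mallows_weight)

lemma sum_mallows_weight_left_tail:
  assumes "0 < p" "p \<le> (1::real)"
  shows "(\<Sum>\<pi> | \<pi> permutes {a..b} \<and> a + int m \<le> \<pi> a. mallows_weight p {a..b} \<pi>) \<le> p ^ m"
  using sum_power_inv_count_left_tail[of p a b m] sum_power_inv_count_pos[OF assms(1), of "{a..b}"]
    assms by (simp add: sum_mallows_weight pos_divide_le_eq)

lemma sum_mallows_weight_right_tail:
  assumes "0 < p" "p \<le> (1::real)"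
  shows "(\<Sum>\<pi> | \<pi> permutes {a..b} \<and> \<pi> b \<le> b - int m. mallows_weight p {a..b} \<pi>) \<le> p ^ m"
  using sum_power_inv_count_right_tail[of p a b m] sum_power_inv_count_pos[OF assms(1), of "{a..b}"]
    assms by (simp add: sum_mallows_weight pos_divide_le_eq)

section \<open>Patterns on intervals\<close>

lemma card_smaller_values_bound:
  fixes \<sigma> :: "int \<Rightarrow> int"
  assumes "x \<in> {a..b::int}"
  shows "a + int (card {y \<in> {a..b}. \<sigma> y < \<sigma> x}) \<le> b"
proof -
  have "card {y \<in> {a..b}. \<sigma> y < \<sigma> x} \<le> card ({a..b} - {x})"
    by (intro card_mono) auto
  then show ?thesis using assms by auto
qed

lemma pattern_atLeastAtMost:
  assumes "x \<in> {a..b::int}"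
  shows "pattern \<sigma> {a..b} x = a + int (card {y \<in> {a..b}. \<sigma> y < \<sigma> x})"
  using assms card_smaller_values_bound[OF assms, of \<sigma>] by (simp add: pattern_def)

lemma pattern_strict_mono:
  assumes "x \<in> {a..b::int}" "y \<in> {a..b}" "\<sigma> y < \<sigma> x"
  shows "pattern \<sigma> {a..b} y < pattern \<sigma> {a..b} x"
proof -
  have "{z \<in> {a..b}. \<sigma> z < \<sigma> y} \<subset> {z \<in> {a..b}. \<sigma> z < \<sigma> x}"
    using assms by auto
  then have "card {z \<in> {a..b}. \<sigma> z < \<sigma> y} < card {z \<in> {a..b}. \<sigma> z < \<sigma> x}"
    by (rule psubset_card_mono[rotated]) (auto intro: finite_subset[of _ "{a..b}"])
  then show ?thesis
    using pattern_atLeastAtMost[OF assms(1), of \<sigma>] pattern_atLeastAtMost[OF assms(2), of \<sigma>]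
    by linarith
qed

lemma pattern_less_iff:
  assumes "inj \<sigma>" "x \<in> {a..b::int}" "y \<in> {a..b}"
  shows "pattern \<sigma> {a..b} y < pattern \<sigma> {a..b} x \<longleftrightarrow> \<sigma> y < \<sigma> x"
proof -
  have "\<sigma> y \<noteq> \<sigma> x \<or> y = x" using assms(1) by (auto dest: injD)
  then show ?thesis
    using pattern_strict_mono[OF assms(2,3)] pattern_strict_mono[OF assms(3,2)]
    by (metis less_asym linorder_neqE)
qed

lemma pattern_permutes:
  assumes "inj \<sigma>"
  shows "pattern \<sigma> {a..b::int} permutes {a..b}"
proof (rule inj_imp_permutes)
  show "inj_on (pattern \<sigma> {a..b}) {a..b}"
    using pattern_less_iff[OF assms] assms by (intro inj_onI) (metis injD linorder_neqE less_irrefl)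
  show "pattern \<sigma> {a..b} x \<in> {a..b}" if "x \<in> {a..b}" for x
    using card_smaller_values_bound[OF that, of \<sigma>] that by (simp add: pattern_atLeastAtMost)
qed (auto simp: pattern_def)

lemma pattern_extend:
  assumes "x \<in> {a..b::int}" "a' \<le> a" "b \<le> b'"
    "\<And>y. y \<in> {a'..<a} \<Longrightarrow> \<sigma> y < \<sigma> x" "\<And>y. y \<in> {b<..b'} \<Longrightarrow> \<sigma> x < \<sigma> y"
  shows "pattern \<sigma> {a'..b'} x = pattern \<sigma> {a..b} x"
proof -
  have "{y \<in> {a'..b'}. \<sigma> y < \<sigma> x} = {y \<in> {a..b}. \<sigma> y < \<sigma> x} \<union> {a'..<a}"
    using assms by (auto simp: not_less) (meson atLeastLessThan_iff greaterThanAtMost_iff less_asym not_le)+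
  moreover have "card ({y \<in> {a..b}. \<sigma> y < \<sigma> x} \<union> {a'..<a})
                 = card {y \<in> {a..b}. \<sigma> y < \<sigma> x} + nat (a - a')"
    by (subst card_Un_disjoint) (auto intro: finite_subset[of _ "{a..b}"])
  ultimately show ?thesis
    using assms(1-3) by (simp add: pattern_atLeastAtMost)
qed

section \<open>The bi-infinite Mallows permutation\<close>

lemma (in finite_measure) abs_measure_diff_le:
  assumes "E \<in> sets M" "F \<in> sets M" "B \<in> sets M" "E \<subseteq> F \<union> B" "F \<subseteq> E \<union> B"
  shows "\<bar>measure M E - measure M F\<bar> \<le> measure M B"
proof -
  have "measure M E \<le> measure M F + measure M B"
    using finite_measure_mono[OF assms(4)] measure_Un_le[OF assms(2,3)] assms(2,3) by auto
  moreover have "measure M F \<le> measure M E + measure M B"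
    using finite_measure_mono[OF assms(5)] measure_Un_le[OF assms(1,3)] assms(1,3) by auto
  ultimately show ?thesis by linarith
qed

lemma (in finite_measure) measure_UN_le_card_mult:
  assumes "finite I" "\<And>i. i \<in> I \<Longrightarrow> A i \<in> sets M" "\<And>i. i \<in> I \<Longrightarrow> measure M (A i) \<le> c"
  shows "measure M (\<Union>i\<in>I. A i) \<le> real (card I) * c"
proof -
  have "measure M (\<Union>i\<in>I. A i) \<le> (\<Sum>i\<in>I. measure M (A i))"
    using assms by (intro finite_measure_subadditive_finite) auto
  also have "\<dots> \<le> real (card I) * c"
    using assms(3) by (rule sum_bounded_above)
  finally show ?thesis .
qed

lemma filterlim_nat_half_at_top: "filterlim (\<lambda>n::nat. nat ((int n - k) div 2)) at_top sequentially"
proof (subst filterlim_at_top, intro allI eventually_sequentiallyI)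
  fix Z n :: nat
  assume "nat (2 * int Z + \<bar>k\<bar>) \<le> n"
  then have "int Z \<le> (int n - k) div 2" by linarith
  then show "Z \<le> nat ((int n - k) div 2)" by linarith
qed

locale mallows_Z_process =
  fixes M :: "'w measure" and Sig :: "'w \<Rightarrow> int \<Rightarrow> int" and p :: real
  assumes mallows_Z: "mallows_Z M Sig p" and p_pos: "0 < p" and p_less_1: "p < 1"
begin

sublocale prob_space M
  using mallows_Z by (simp add: mallows_Z_def)

lemma inj_Sig: "w \<in> space M \<Longrightarrow> inj (Sig w)"
  using mallows_Z by (auto simp: mallows_Z_def bij_is_inj)

lemma measurable_Sig: "(\<lambda>w. Sig w i) \<in> measurable M (count_space UNIV)"
  using mallows_Z by (simp add: mallows_Z_def)

lemma sets_Sig_eq: "{w \<in> space M. Sig w i = j} \<in> sets M"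
  using measurable_sets[OF measurable_Sig, of "{j}" i] by (simp add: vimage_def Int_def conj_commute)

lemma
  assumes "\<pi> permutes {a..b}"
  shows sets_pattern_eq: "{w \<in> space M. pattern (Sig w) {a..b} = \<pi>} \<in> sets M"
    and prob_pattern_eq: "prob {w \<in> space M. pattern (Sig w) {a..b} = \<pi>} = mallows_weight p {a..b} \<pi>"
  using mallows_Z assms unfolding mallows_Z_def by blast+

lemma
  shows sets_pattern: "{w \<in> space M. P (pattern (Sig w) {a..b})} \<in> sets M"
    and prob_pattern: "prob {w \<in> space M. P (pattern (Sig w) {a..b})}
                       = (\<Sum>\<pi> | \<pi> permutes {a..b} \<and> P \<pi>. mallows_weight p {a..b} \<pi>)"
proof -
  let ?S = "{\<pi>. \<pi> permutes {a..b} \<and> P \<pi>}"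
  let ?E = "\<lambda>\<pi>. {w \<in> space M. pattern (Sig w) {a..b} = \<pi>}"
  have eq: "{w \<in> space M. P (pattern (Sig w) {a..b})} = (\<Union>\<pi>\<in>?S. ?E \<pi>)"
    using pattern_permutes[OF inj_Sig] by auto
  have fin: "finite ?S" by (simp add: finite_permutations)
  have sets: "?E ` ?S \<subseteq> sets M" using sets_pattern_eq by auto
  show "{w \<in> space M. P (pattern (Sig w) {a..b})} \<in> sets M"
    unfolding eq by (rule sets.finite_UN[OF fin]) (simp add: sets_pattern_eq)
  have "disjoint_family_on ?E ?S" by (auto simp: disjoint_family_on_def)
  then have "prob (\<Union>\<pi>\<in>?S. ?E \<pi>) = (\<Sum>\<pi>\<in>?S. prob (?E \<pi>))"
    by (rule finite_measure_finite_Union[OF fin sets])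
  also have "\<dots> = (\<Sum>\<pi>\<in>?S. mallows_weight p {a..b} \<pi>)"
    by (rule sum.cong) (simp_all add: prob_pattern_eq)
  finally show "prob {w \<in> space M. P (pattern (Sig w) {a..b})}
           = (\<Sum>\<pi> | \<pi> permutes {a..b} \<and> P \<pi>. mallows_weight p {a..b} \<pi>)"
    unfolding eq .
qed

lemma prob_pattern_shift:
  "prob {w \<in> space M. pattern (Sig w) {a..b} x = y}
   = prob {w \<in> space M. pattern (Sig w) {a + k..b + k} (x + k) = y + k}"
proof -
  have "prob {w \<in> space M. pattern (Sig w) {a..b} x = y}
      = (\<Sum>\<pi> | \<pi> permutes {a..b} \<and> \<pi> x = y. mallows_weight p {a..b} \<pi>)"
    by (rule prob_pattern)
  also have "\<dots> = (\<Sum>\<pi> | \<pi> permutes {a + k..b + k} \<and> \<pi> (x + k) = y + k.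
                     mallows_weight p {a + k..b + k} \<pi>)"
    by (rule sum_mallows_weight_shift)
  also have "\<dots> = prob {w \<in> space M. pattern (Sig w) {a + k..b + k} (x + k) = y + k}"
    by (rule prob_pattern[symmetric])
  finally show ?thesis .
qed

text \<open>If \<open>\<Sigma> b < \<Sigma> a\<close>, then in the pattern on \<open>{a..b}\<close> either \<open>a\<close> is sent at least half the
  distance up or \<open>b\<close> at least half the distance down, and both tails are geometric.\<close>

lemma
  assumes "a < b"
  shows sets_inversion: "{w \<in> space M. Sig w b < Sig w a} \<in> sets M"
    and prob_inversion_le: "prob {w \<in> space M. Sig w b < Sig w a} \<le> 2 * p ^ nat ((b - a) div 2)"
proof -
  define m where "m = nat ((b - a) div 2)"
  let ?pat = "\<lambda>w. pattern (Sig w) {a..b}"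
  let ?L = "{w \<in> space M. a + int m \<le> ?pat w a}"
  let ?R = "{w \<in> space M. ?pat w b \<le> b - int m}"
  have m: "2 * int m \<le> b - a" using assms unfolding m_def by linarith
  have eq: "{w \<in> space M. Sig w b < Sig w a} = {w \<in> space M. ?pat w b < ?pat w a}"
    using pattern_less_iff[OF inj_Sig] assms by auto
  then show "{w \<in> space M. Sig w b < Sig w a} \<in> sets M"
    using sets_pattern[of "\<lambda>\<pi>. \<pi> b < \<pi> a"] by simp
  have sets: "?L \<in> sets M" "?R \<in> sets M"
    using sets_pattern[of "\<lambda>\<pi>. a + int m \<le> \<pi> a"] sets_pattern[of "\<lambda>\<pi>. \<pi> b \<le> b - int m"] by auto
  have "{w \<in> space M. ?pat w b < ?pat w a} \<subseteq> ?L \<union> ?R" using m by auto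
  then have "prob {w \<in> space M. Sig w b < Sig w a} \<le> prob (?L \<union> ?R)"
    unfolding eq using sets by (intro finite_measure_mono) auto
  also have "\<dots> \<le> prob ?L + prob ?R" by (rule measure_Un_le[OF sets])
  also have "\<dots> \<le> p ^ m + p ^ m"
    using prob_pattern[of "\<lambda>\<pi>. a + int m \<le> \<pi> a"] prob_pattern[of "\<lambda>\<pi>. \<pi> b \<le> b - int m"]
      sum_mallows_weight_left_tail[OF p_pos] sum_mallows_weight_right_tail[OF p_pos] p_less_1
    by (intro add_mono) auto
  finally show "prob {w \<in> space M. Sig w b < Sig w a} \<le> 2 * p ^ nat ((b - a) div 2)"
    by (simp add: m_def)
qed

lemma prob_inversion_le_dist:
  assumes "a < b" "D \<le> b - a"
  shows "prob {w \<in> space M. Sig w b < Sig w a} \<le> 2 * p ^ nat (D div 2)"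
proof -
  have "p ^ nat ((b - a) div 2) \<le> p ^ nat (D div 2)"
    using assms p_pos p_less_1 by (intro power_decreasing nat_mono zdiv_mono1) auto
  then show ?thesis using prob_inversion_le[OF assms(1)] by linarith
qed

text \<open>The two patterns at \<open>x\<close> can only differ if \<open>x\<close> is inverted with one of the new
  positions, all of which are far from \<open>x\<close>.\<close>

lemma prob_pattern_enlarge:
  assumes "a' \<le> a" "a \<le> x" "x \<le> b" "b \<le> b'" "D \<le> x - a + 1" "D \<le> b + 1 - x"
  shows "\<bar>prob {w \<in> space M. pattern (Sig w) {a'..b'} x = j}
          - prob {w \<in> space M. pattern (Sig w) {a..b} x = j}\<bar>
         \<le> 2 * real (nat (a - a') + nat (b' - b)) * p ^ nat (D div 2)"
proof -
  define L where "L = (\<Union>y\<in>{a'..<a}. {w \<in> space M. Sig w x < Sig w y})"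
  define R where "R = (\<Union>y\<in>{b<..b'}. {w \<in> space M. Sig w y < Sig w x})"
  have L_parts: "{w \<in> space M. Sig w x < Sig w y} \<in> sets M"
      "prob {w \<in> space M. Sig w x < Sig w y} \<le> 2 * p ^ nat (D div 2)" if "y \<in> {a'..<a}" for y
    using that assms by (auto intro: sets_inversion prob_inversion_le_dist)
  have R_parts: "{w \<in> space M. Sig w y < Sig w x} \<in> sets M"
      "prob {w \<in> space M. Sig w y < Sig w x} \<le> 2 * p ^ nat (D div 2)" if "y \<in> {b<..b'}" for y
    using that assms by (auto intro: sets_inversion prob_inversion_le_dist)
  have L: "L \<in> sets M" "prob L \<le> real (card {a'..<a}) * (2 * p ^ nat (D div 2))"
    unfolding L_def by (rule sets.finite_UN measure_UN_le_card_mult; simp add: L_parts)+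
  have R: "R \<in> sets M" "prob R \<le> real (card {b<..b'}) * (2 * p ^ nat (D div 2))"
    unfolding R_def by (rule sets.finite_UN measure_UN_le_card_mult; simp add: R_parts)+
  have same: "pattern (Sig w) {a'..b'} x = pattern (Sig w) {a..b} x"
    if "w \<in> space M" "w \<notin> L \<union> R" for w
  proof (rule pattern_extend)
    have ne: "Sig w y \<noteq> Sig w x" if "y \<noteq> x" for y
      using inj_Sig[OF \<open>w \<in> space M\<close>] that by (auto dest: injD)
    show "Sig w y < Sig w x" if "y \<in> {a'..<a}" for y
    proof -
      have "\<not> Sig w x < Sig w y" using that \<open>w \<in> space M\<close> \<open>w \<notin> L \<union> R\<close> unfolding L_def by blast
      moreover have "Sig w y \<noteq> Sig w x" using ne that assms by auto
      ultimately show ?thesis by linarith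
    qed
    show "Sig w x < Sig w y" if "y \<in> {b<..b'}" for y
    proof -
      have "\<not> Sig w y < Sig w x" using that \<open>w \<in> space M\<close> \<open>w \<notin> L \<union> R\<close> unfolding R_def by blast
      moreover have "Sig w y \<noteq> Sig w x" using ne that assms by auto
      ultimately show ?thesis by linarith
    qed
  qed (use assms in auto)
  have "\<bar>prob {w \<in> space M. pattern (Sig w) {a'..b'} x = j}
          - prob {w \<in> space M. pattern (Sig w) {a..b} x = j}\<bar> \<le> prob (L \<union> R)"
    using same L(1) R(1) sets_pattern[of "\<lambda>\<pi>. \<pi> x = j"]
    by (intro abs_measure_diff_le) auto
  also have "\<dots> \<le> prob L + prob R" by (rule measure_Un_le[OF L(1) R(1)])
  finally show ?thesis using L(2) R(2) by (simp add: algebra_simps)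
qed

lemma prob_pattern_tendsto:
  "(\<lambda>n. prob {w \<in> space M. pattern (Sig w) {- int n..int n} i = j})
     \<longlonglongrightarrow> prob {w \<in> space M. Sig w i = j}"
proof -
  let ?s = "\<lambda>n. indicator {w \<in> space M. pattern (Sig w) {- int n..int n} i = j} :: 'w \<Rightarrow> real"
  let ?f = "indicator {w \<in> space M. Sig w i = j} :: 'w \<Rightarrow> real"
  have "AE w in M. \<forall>i. eventually (\<lambda>n. pattern (Sig w) {- int n..int n} i = Sig w i) sequentially"
    using mallows_Z by (simp add: mallows_Z_def)
  then have "AE w in M. (\<lambda>n. ?s n w) \<longlonglongrightarrow> ?f w"
  proof (rule AE_mp, intro AE_I2 impI)
    fix w assume "w \<in> space M"
      and "\<forall>i. eventually (\<lambda>n. pattern (Sig w) {- int n..int n} i = Sig w i) sequentially"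
    then have "eventually (\<lambda>n. ?s n w = ?f w) sequentially"
      by (auto simp: indicator_def elim!: allE[of _ i] eventually_mono)
    then show "(\<lambda>n. ?s n w) \<longlonglongrightarrow> ?f w" by (rule tendsto_eventually)
  qed
  then have "(\<lambda>n. integral\<^sup>L M (?s n)) \<longlonglongrightarrow> integral\<^sup>L M ?f"
    by (intro integral_dominated_convergence[where w = "\<lambda>_. 1"])
      (auto simp: indicator_def intro: borel_measurable_indicator sets_Sig_eq sets_pattern)
  moreover have "{w \<in> space M. Q w} \<inter> space M = {w \<in> space M. Q w}" for Q by auto
  ultimately show ?thesis by (simp add: sets_Sig_eq sets_pattern)
qed

text \<open>The window probabilities for \<open>\<Sigma> i = j\<close> and \<open>\<Sigma> 0 = j - i\<close> are those of two windows
  around \<open>0\<close> that differ by the shift \<open>i\<close>; both are close to that of a common larger window.\<close>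

lemma prob_pattern_translate_close:
  assumes "\<bar>i\<bar> \<le> N"
  shows "\<bar>prob {w \<in> space M. pattern (Sig w) {- N..N} i = j}
          - prob {w \<in> space M. pattern (Sig w) {- N..N} 0 = j - i}\<bar>
         \<le> 8 * \<bar>i\<bar> * p ^ nat ((N - \<bar>i\<bar>) div 2)"
proof -
  define k where "k = \<bar>i\<bar>"
  have k: "i \<le> k" "- i \<le> k" "k \<le> N" using assms by (auto simp: k_def)
  let ?A = "prob {w \<in> space M. pattern (Sig w) {- N..N} i = j}"
  let ?B = "prob {w \<in> space M. pattern (Sig w) {- N..N} 0 = j - i}"
  let ?C = "prob {w \<in> space M. pattern (Sig w) {- N - k..N + k} 0 = j - i}"
  have "?A = prob {w \<in> space M. pattern (Sig w) {- N + - i..N + - i} (i + - i) = j + - i}"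
    by (rule prob_pattern_shift)
  then have "\<bar>?C - ?A\<bar> \<le> 2 * real (nat (- N - i - (- N - k)) + nat (N + k - (N - i)))
                            * p ^ nat ((N - k) div 2)"
    using prob_pattern_enlarge[of "- N - k" "- N - i" 0 "N - i" "N + k" "N - k" "j - i"] k by simp
  also have "real (nat (- N - i - (- N - k)) + nat (N + k - (N - i))) = 2 * k"
    using k by simp
  finally have CA: "\<bar>?C - ?A\<bar> \<le> 4 * k * p ^ nat ((N - k) div 2)" by simp
  have "\<bar>?C - ?B\<bar> \<le> 2 * real (nat (- N - (- N - k)) + nat (N + k - N)) * p ^ nat ((N - k) div 2)"
    using prob_pattern_enlarge[of "- N - k" "- N" 0 N "N + k" "N - k" "j - i"] k by simp
  also have "real (nat (- N - (- N - k)) + nat (N + k - N)) = 2 * k"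
    using k by simp
  finally have CB: "\<bar>?C - ?B\<bar> \<le> 4 * k * p ^ nat ((N - k) div 2)" by simp
  have "\<bar>?A - ?B\<bar> \<le> 8 * k * p ^ nat ((N - k) div 2)" using CA CB by linarith
  then show ?thesis by (simp add: k_def)
qed

lemma prob_Sig_translate:
  "prob {w \<in> space M. Sig w i = j} = prob {w \<in> space M. Sig w 0 = j - i}"
proof -
  define A where "A n = prob {w \<in> space M. pattern (Sig w) {- int n..int n} i = j}" for n
  define B where "B n = prob {w \<in> space M. pattern (Sig w) {- int n..int n} 0 = j - i}" for n
  define e where "e n = 8 * \<bar>i\<bar> * p ^ nat ((int n - \<bar>i\<bar>) div 2)" for n
  have "e \<longlonglongrightarrow> 0"
    unfolding e_def using p_pos p_less_1
    by (intro tendsto_mult_right_zero tendsto_power_zero filterlim_nat_half_at_top) auto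
  moreover have "\<forall>\<^sub>F n in sequentially. norm (A n - B n) \<le> e n"
    unfolding A_def B_def e_def
    by (rule eventually_sequentiallyI[of "nat \<bar>i\<bar>"]) (simp add: prob_pattern_translate_close)
  ultimately have "(\<lambda>n. A n - B n) \<longlonglongrightarrow> 0"
    by (rule Lim_null_comparison[rotated])
  moreover have "(\<lambda>n. A n - B n)
      \<longlonglongrightarrow> prob {w \<in> space M. Sig w i = j} - prob {w \<in> space M. Sig w 0 = j - i}"
    unfolding A_def B_def by (intro tendsto_diff prob_pattern_tendsto)
  ultimately show ?thesis using LIMSEQ_unique by fastforce
qed

lemma prob_Sig_swap_adj:
  assumes "u \<in> {v, v + 1}"
  shows "p * prob {w \<in> space M. Sig w i = u} \<le> prob {w \<in> space M. Sig w i = swap_adj v u}"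
proof (rule tendsto_le[OF trivial_limit_sequentially prob_pattern_tendsto
      tendsto_mult_left[OF prob_pattern_tendsto]])
  show "\<forall>\<^sub>F n in sequentially. p * prob {w \<in> space M. pattern (Sig w) {- int n..int n} i = u}
          \<le> prob {w \<in> space M. pattern (Sig w) {- int n..int n} i = swap_adj v u}"
  proof (rule eventually_sequentiallyI)
    fix n assume "nat (\<bar>v\<bar> + 1) \<le> n"
    then have "v \<in> {- int n..int n}" "v + 1 \<in> {- int n..int n}" by auto
    then show "p * prob {w \<in> space M. pattern (Sig w) {- int n..int n} i = u}
          \<le> prob {w \<in> space M. pattern (Sig w) {- int n..int n} i = swap_adj v u}"
      using sum_mallows_weight_swap_adj[of "{- int n..int n}" v u p i] assms p_pos p_less_1
        prob_pattern[of "\<lambda>\<pi>. \<pi> i = u"] prob_pattern[of "\<lambda>\<pi>. \<pi> i = swap_adj v u"]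
      by simp
  qed
qed

end

section \<open>Fixed points of reflected Mallows permutations\<close>

lemma C1_eq_nn_integral: "C1 \<pi> = (\<integral>\<^sup>+ i. of_bool (\<pi> i = i) \<partial>count_space UNIV)"
proof -
  have "(\<integral>\<^sup>+ i. of_bool (\<pi> i = i) \<partial>count_space UNIV)
      = (\<integral>\<^sup>+ i. indicator {i. \<pi> i = i} i \<partial>count_space UNIV)"
    by (simp add: indicator_def)
  then show ?thesis by (simp add: C1_def)
qed

lemma nn_integral_count_space_int_parity:
  fixes G :: "int \<Rightarrow> ennreal"
  shows "(\<integral>\<^sup>+ k. G k \<partial>count_space UNIV)
         = (\<integral>\<^sup>+ i. G (c - 2 * i) \<partial>count_space UNIV) + (\<integral>\<^sup>+ i. G (c + 1 - 2 * i) \<partial>count_space UNIV)"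
proof -
  let ?E = "{k. even (c - k)}" and ?O = "{k. odd (c - k)}"
  have bij: "bij_betw (\<lambda>i. c - 2 * i) UNIV ?E" "bij_betw (\<lambda>i. c + 1 - 2 * i) UNIV ?O"
    by (rule bij_betwI[where g = "\<lambda>k. (c - k) div 2"], auto)
      (rule bij_betwI[where g = "\<lambda>k. (c + 1 - k) div 2"], auto)
  have "(\<integral>\<^sup>+ k. G k \<partial>count_space UNIV)
        = (\<integral>\<^sup>+ k. G k * indicator ?E k + G k * indicator ?O k \<partial>count_space UNIV)"
    by (intro nn_integral_cong) (auto simp: indicator_def)
  also have "\<dots> = (\<integral>\<^sup>+ k. G k \<partial>count_space ?E) + (\<integral>\<^sup>+ k. G k \<partial>count_space ?O)"
    by (simp add: nn_integral_add nn_integral_count_space_indicator)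
  also have "\<dots> = (\<integral>\<^sup>+ i. G (c - 2 * i) \<partial>count_space UNIV) + (\<integral>\<^sup>+ i. G (c + 1 - 2 * i) \<partial>count_space UNIV)"
    by (simp add: nn_integral_bij_count_space[OF bij(1)] nn_integral_bij_count_space[OF bij(2)])
  finally show ?thesis .
qed

lemma ennreal_bounds_of_complementary:
  fixes X Y :: ennreal
  assumes "0 < p" "X + Y = 1" "ennreal p * X \<le> Y" "ennreal p * Y \<le> X"
  shows "ennreal (p / (1 + p)) \<le> X \<and> X \<le> ennreal (1 / (1 + p))"
proof -
  obtain u v where uv: "X = ennreal u" "Y = ennreal v" "0 \<le> u" "0 \<le> v"
    using assms(2) by (cases X; cases Y) auto
  then have sum: "u + v = 1"
    using assms(2) by (metis ennreal_1 ennreal_inj ennreal_plus add_nonneg_nonneg zero_le_one)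
  have "p * u \<le> v" "p * v \<le> u"
    using assms(1,3,4) uv by (simp_all add: ennreal_mult'[symmetric])
  moreover have "v = 1 - u" using sum by simp
  ultimately have "u * (1 + p) \<le> 1" "p \<le> u * (1 + p)" by (simp_all add: algebra_simps)
  then have "u \<le> 1 / (1 + p)" "p / (1 + p) \<le> u"
    using assms(1) by (simp_all add: pos_le_divide_eq pos_divide_le_eq)
  then show ?thesis using uv by (simp add: ennreal_leI)
qed

context mallows_Z_process
begin

definition law0 :: "int \<Rightarrow> real" where
  "law0 k = prob {w \<in> space M. Sig w 0 = k}"

lemma borel_measurable_of_bool_Sig: "(\<lambda>w. of_bool (Sig w i = j) :: ennreal) \<in> borel_measurable M"
  using measurable_compose[OF measurable_Sig, of "\<lambda>v. of_bool (v = j) :: ennreal"] by simp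

lemma nn_integral_of_bool_Sig:
  "(\<integral>\<^sup>+ w. of_bool (Sig w i = j) \<partial>M) = ennreal (prob {w \<in> space M. Sig w i = j})"
proof -
  have "(\<integral>\<^sup>+ w. of_bool (Sig w i = j) \<partial>M) = (\<integral>\<^sup>+ w. indicator {w \<in> space M. Sig w i = j} w \<partial>M)"
    by (rule nn_integral_cong) (simp add: indicator_def)
  then show ?thesis by (simp add: sets_Sig_eq emeasure_eq_measure)
qed

lemma nn_integral_law0: "(\<integral>\<^sup>+ k. ennreal (law0 k) \<partial>count_space UNIV) = 1"
proof -
  have "(\<integral>\<^sup>+ k. ennreal (law0 k) \<partial>count_space UNIV)
      = (\<integral>\<^sup>+ k. \<integral>\<^sup>+ w. of_bool (Sig w 0 = k) \<partial>M \<partial>count_space UNIV)"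
    by (simp add: law0_def nn_integral_of_bool_Sig)
  also have "\<dots> = (\<integral>\<^sup>+ w. \<integral>\<^sup>+ k. of_bool (Sig w 0 = k) \<partial>count_space UNIV \<partial>M)"
    by (rule nn_integral_count_space_nn_integral[symmetric]) (simp_all add: borel_measurable_of_bool_Sig)
  also have "\<dots> = (\<integral>\<^sup>+ w. 1 \<partial>M)"
  proof (intro nn_integral_cong)
    fix w
    have "(\<integral>\<^sup>+ k. of_bool (Sig w 0 = k) \<partial>count_space UNIV)
        = (\<integral>\<^sup>+ k. indicator {Sig w 0} k \<partial>count_space UNIV)"
      by (intro nn_integral_cong) (auto simp: indicator_def)
    then show "(\<integral>\<^sup>+ k. of_bool (Sig w 0 = k) \<partial>count_space UNIV) = 1" by simp
  qed
  finally show ?thesis by (simp add: emeasure_space_1)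
qed

lemma nn_integral_C1_reflection:
  "(\<integral>\<^sup>+ w. C1 ((\<lambda>v. c - v) \<circ> Sig w) \<partial>M)
   = (\<integral>\<^sup>+ i. ennreal (law0 (c - 2 * i)) \<partial>count_space UNIV)"
proof -
  have fixed_iff: "c - Sig w i = i \<longleftrightarrow> Sig w i = c - i" for w i by auto
  have "(\<integral>\<^sup>+ w. C1 ((\<lambda>v. c - v) \<circ> Sig w) \<partial>M)
      = (\<integral>\<^sup>+ w. \<integral>\<^sup>+ i. of_bool (Sig w i = c - i) \<partial>count_space UNIV \<partial>M)"
    by (simp add: C1_eq_nn_integral fixed_iff)
  also have "\<dots> = (\<integral>\<^sup>+ i. \<integral>\<^sup>+ w. of_bool (Sig w i = c - i) \<partial>M \<partial>count_space UNIV)"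
    by (rule nn_integral_count_space_nn_integral) (simp_all add: borel_measurable_of_bool_Sig)
  also have "\<dots> = (\<integral>\<^sup>+ i. ennreal (law0 (c - 2 * i)) \<partial>count_space UNIV)"
  proof (intro nn_integral_cong)
    fix i
    have "prob {w \<in> space M. Sig w i = c - i} = law0 (c - 2 * i)"
      using prob_Sig_translate[of i "c - i"] by (simp add: law0_def algebra_simps)
    then show "(\<integral>\<^sup>+ w. of_bool (Sig w i = c - i) \<partial>M) = ennreal (law0 (c - 2 * i))"
      by (simp add: nn_integral_of_bool_Sig)
  qed
  finally show ?thesis .
qed

lemma expected_C1_reflection_bounds:
  "ennreal (p / (1 + p)) \<le> (\<integral>\<^sup>+ w. C1 ((\<lambda>v. c - v) \<circ> Sig w) \<partial>M)
   \<and> (\<integral>\<^sup>+ w. C1 ((\<lambda>v. c - v) \<circ> Sig w) \<partial>M) \<le> ennreal (1 / (1 + p))"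
proof -
  let ?E = "\<lambda>c. \<integral>\<^sup>+ i. ennreal (law0 (c - 2 * i)) \<partial>count_space UNIV"
  have ratio: "ennreal p * ennreal (law0 u) \<le> ennreal (law0 (swap_adj v u))" if "u \<in> {v, v + 1}" for u v
    using prob_Sig_swap_adj[OF that, of 0] p_pos
    by (simp add: law0_def ennreal_mult'[symmetric] ennreal_leI)
  have up: "ennreal p * ennreal (law0 (c - 2 * i)) \<le> ennreal (law0 (c + 1 - 2 * i))" for i
    using ratio[of "c - 2 * i" "c - 2 * i"] by (simp add: swap_adj_apply algebra_simps)
  have down: "ennreal p * ennreal (law0 (c + 1 - 2 * i)) \<le> ennreal (law0 (c - 2 * i))" for i
    using ratio[of "c + 1 - 2 * i" "c - 2 * i"] by (simp add: swap_adj_apply algebra_simps)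
  have "ennreal p * ?E c \<le> ?E (c + 1)"
    by (subst nn_integral_cmult[symmetric]) (auto intro!: nn_integral_mono up)
  moreover have "ennreal p * ?E (c + 1) \<le> ?E c"
    by (subst nn_integral_cmult[symmetric]) (auto intro!: nn_integral_mono down)
  moreover have "?E c + ?E (c + 1) = 1"
    using nn_integral_count_space_int_parity[of "\<lambda>k. ennreal (law0 k)" c] by (simp add: nn_integral_law0)
  ultimately show ?thesis
    unfolding nn_integral_C1_reflection by (intro ennreal_bounds_of_complementary p_pos)
qed

end

theorem lemma8p2:
  fixes q :: real and M :: "'w measure" and Sig :: "'w \<Rightarrow> int \<Rightarrow> int"
  assumes "q > 1"
    and "mallows_Z M Sig (1 / q)"
  shows "ennreal (1 / (1 + q)) \<le> (\<integral>\<^sup>+ w. C1 (rho_map \<circ> Sig w) \<partial>M)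
       \<and> (\<integral>\<^sup>+ w. C1 (rho_map \<circ> Sig w) \<partial>M) \<le> ennreal (q / (1 + q))
       \<and> ennreal (1 / (1 + q)) \<le> (\<integral>\<^sup>+ w. C1 (r_map \<circ> Sig w) \<partial>M)
       \<and> (\<integral>\<^sup>+ w. C1 (r_map \<circ> Sig w) \<partial>M) \<le> ennreal (q / (1 + q))"
proof -
  interpret mallows_Z_process M Sig "1 / q"
    using assms by unfold_locales auto
  have "rho_map = (\<lambda>v. 1 - v)" "r_map = (\<lambda>v. 0 - v)"
    by (simp_all add: fun_eq_iff rho_map_def r_map_def)
  moreover have "1 / q / (1 + 1 / q) = 1 / (1 + q)" "1 / (1 + 1 / q) = q / (1 + q)"
    using assms(1) by (simp_all add: field_simps)
  ultimately show ?thesis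
    using expected_C1_reflection_bounds[of 1] expected_C1_reflection_bounds[of 0] by simp
qed

end
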